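(* Let $\lambda$ be a strongly inaccessible cardinal and regard ${}^\lambda2$ as an abelian group under coordinatewise addition modulo $2$, denoted $\oplus$. Then $\mathrm{id}(\mathbb{Q}_\lambda)$ is closed under translation: for every $\mathbf B\subseteq{}^\lambda2$ and $\eta\in{}^\lambda2$, $\mathbf B\in\mathrm{id}(\mathbb{Q}_\lambda)$ if and only if $\eta\oplus\mathbf B:=\{\eta\oplus\nu:\nu\in\mathbf B\}\in\mathrm{id}(\mathbb{Q}_\lambda)$.
   Context: Cardinals denoted $\partial,\kappa,\lambda$ are strongly inaccessible. For a set $T$ of sequences and an ordinal $\delta$, $\lim_\delta(T)=\{\nu\in{}^\delta 2: \nu\restriction\alpha\in T \text{ for all }\alpha<\delta\}$. The forcing notion $\mathbb{Q}_\kappa$ is defined by induction on strongly inaccessible $\kappa$: $p\in\mathbb{Q}_\kappa$ iff there is a witness $(\varrho,S,\bar\Lambda)$, meaning: (a) $p$ is a nonempty subset of ${}^{\kappa>}2$ closed under initial segments; (b) $S\subseteq\kappa$, every member of $S$ is strongly inaccessible, $S$ is not stationary in $\kappa$, and $S\cap\partial$ is not stationary in $\partial$ for every strongly inaccessible $\partial<\kappa$; (c) $\varrho\in{}^{\kappa>}2$, $p\cap{}^\alpha 2=\{\varrho\restriction\alpha\}$ for all $\alpha\le\ell g(\varrho)$, and $\varrho^\frown\langle 0\rangle,\varrho^\frown\langle1\rangle\in p$; (d) if $\varrho\trianglelefteq\eta\in p$ then $\eta^\frown\langle0\rangle,\eta^\frown\langle1\rangle\in p$; (e) if $\delta\in\kappa\setminus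 S$ is a limit ordinal with $\delta>\ell g(\varrho)$ and $\eta\in{}^\delta2$, then $\eta\in p$ iff $\eta\restriction\alpha\in p$ for all $\alpha<\delta$; (f) $\bar\Lambda=\langle\Lambda_\partial:\partial\in S\rangle$ where each $\Lambda_\partial$ is a set of at most $\partial$ dense open subsets of $\mathbb{Q}_\partial$; (g) if $\partial\in S$ and $\partial>\ell g(\varrho)$ then $p\cap{}^{\partial>}2\in\mathbb{Q}_\partial$, and for $\eta\in{}^\partial2$: $\eta\in p$ iff ($\eta\restriction\alpha\in p$ for all $\alpha<\partial$ and for every $\mathscr I\in\Lambda_\partial$ there is $q\in\mathscr I$ with $\eta\in\lim_\partial(q)$). The order is reverse inclusion. An $\eta\in{}^\lambda2$ fulfils $\mathscr I\subseteq\mathbb{Q}_\lambda$ if $\eta\in\lim_\lambda(q)$ for some $q\in\mathscr I$. $\mathrm{id}(\mathbb{Q}_\lambda)$ is the set of $A\subseteq{}^\lambda2$ for which there are $i( * )\le\lambda$ and dense open subsets $\mathscr I_i$ ($i<i( * )$) of $\mathbb{Q}_\lambda$ such that every $\eta\in A$ fails to fulfil $\mathscr I_i$ for some $i<i( * )$. *)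

theory Defs
  imports Main "HOL-Library.Countable_Set"
begin

text \<open>Ordinals are modelled as elements of an arbitrary well-ordered type 'o.
A sequence (element of some \<open>{}^\<alpha>2\<close>) is a partial map 'o to bool whose
domain is the initial segment below \<alpha>.\<close>

type_synonym 'o seq = "'o \<Rightarrow> bool option"

definition below :: "'o::wellorder \<Rightarrow> 'o set" where
  "below \<alpha> = {\<beta>. \<beta> < \<alpha>}"

definition seq_of_len :: "'o::wellorder \<Rightarrow> 'o seq \<Rightarrow> bool" where
  "seq_of_len \<alpha> \<eta> \<longleftrightarrow> dom \<eta> = below \<alpha>"

definition seqs :: "'o::wellorder \<Rightarrow> 'o seq set" where
  "seqs \<alpha> = {\<eta>. seq_of_len \<alpha> \<eta>}"

definition seqs_below :: "'o::wellorder \<Rightarrow> 'o seq set" where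
  "seqs_below \<kappa> = {\<eta>. \<exists>\<alpha><\<kappa>. seq_of_len \<alpha> \<eta>}"

definition lg :: "'o::wellorder seq \<Rightarrow> 'o" where
  "lg \<eta> = (LEAST \<alpha>. \<alpha> \<notin> dom \<eta>)"

definition restr :: "'o::wellorder seq \<Rightarrow> 'o \<Rightarrow> 'o seq" where
  "restr \<eta> \<alpha> = \<eta> |` below \<alpha>"

text \<open>\<open>\<eta>\<^sup>\<frown>\<langle>i\<rangle>\<close>; bit 0 is False, bit 1 is True\<close>
definition snoc :: "'o::wellorder seq \<Rightarrow> bool \<Rightarrow> 'o seq" where
  "snoc \<eta> i = \<eta>(lg \<eta> \<mapsto> i)"

definition init_seg :: "'o::wellorder seq \<Rightarrow> 'o seq \<Rightarrow> bool" where
  "init_seg \<rho> \<eta> \<longleftrightarrow> lg \<rho> \<le> lg \<eta> \<and> restr \<eta> (lg \<rho>) = \<rho>"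

definition lim_seqs :: "'o::wellorder \<Rightarrow> 'o seq set \<Rightarrow> 'o seq set" where
  "lim_seqs \<delta> T = {\<nu>. seq_of_len \<delta> \<nu> \<and> (\<forall>\<alpha><\<delta>. restr \<nu> \<alpha> \<in> T)}"

definition limit_ord :: "'o::wellorder \<Rightarrow> bool" where
  "limit_ord \<delta> \<longleftrightarrow> (\<exists>\<beta>. \<beta> < \<delta>) \<and> (\<forall>\<beta><\<delta>. \<exists>\<gamma>. \<beta> < \<gamma> \<and> \<gamma> < \<delta>)"

definition inj_into :: "'a set \<Rightarrow> 'b set \<Rightarrow> bool" where
  "inj_into A B \<longleftrightarrow> (\<exists>f. inj_on f A \<and> f ` A \<subseteq> B)"

text \<open>strongly inaccessible: uncountable, a cardinal, regular, strong limit\<close>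
definition strongly_inaccessible :: "'o::wellorder \<Rightarrow> bool" where
  "strongly_inaccessible \<kappa> \<longleftrightarrow>
     \<not> countable (below \<kappa>) \<and>
     (\<forall>\<mu><\<kappa>. \<not> inj_into (below \<kappa>) (below \<mu>)) \<and>
     (\<forall>X. X \<subseteq> below \<kappa> \<and> \<not> inj_into (below \<kappa>) X \<longrightarrow> (\<exists>\<gamma><\<kappa>. \<forall>x\<in>X. x < \<gamma>)) \<and>
     (\<forall>\<mu><\<kappa>. inj_into (Pow (below \<mu>)) (below \<kappa>) \<and> \<not> inj_into (below \<kappa>) (Pow (below \<mu>)))"

definition club :: "'o::wellorder \<Rightarrow> 'o set \<Rightarrow> bool" where
  "club \<kappa> C \<longleftrightarrow> C \<subseteq> below \<kappa> \<and> (\<forall>\<beta><\<kappa>. \<exists>\<gamma>\<in>C. \<beta> \<le> \<gamma>) \<and>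
     (\<forall>\<delta><\<kappa>. limit_ord \<delta> \<and> (\<forall>\<beta><\<delta>. \<exists>\<gamma>\<in>C. \<beta> \<le> \<gamma> \<and> \<gamma> < \<delta>) \<longrightarrow> \<delta> \<in> C)"

definition stationary :: "'o::wellorder \<Rightarrow> 'o set \<Rightarrow> bool" where
  "stationary \<kappa> S \<longleftrightarrow> S \<subseteq> below \<kappa> \<and> (\<forall>C. club \<kappa> C \<longrightarrow> S \<inter> C \<noteq> {})"

text \<open>dense open subsets of a forcing notion P ordered by reverse inclusion\<close>
definition dense_open :: "'o seq set set \<Rightarrow> 'o seq set set \<Rightarrow> bool" where
  "dense_open P I \<longleftrightarrow> I \<subseteq> P \<and> (\<forall>p\<in>I. \<forall>q\<in>P. q \<subseteq> p \<longrightarrow> q \<in> I) \<and>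
     (\<forall>p\<in>P. \<exists>q\<in>I. q \<subseteq> p)"

text \<open>\<open>(\<rho>,S,\<Lambda>)\<close> witnesses \<open>p \<in> \<bbbQ>_\<kappa>\<close>, given the forcing notions \<open>Qr d\<close> for \<open>d < \<kappa>\<close>\<close>
definition Q_witness ::
  "('o::wellorder \<Rightarrow> 'o seq set set) \<Rightarrow> 'o \<Rightarrow> 'o seq set \<Rightarrow> 'o seq \<Rightarrow> 'o set
     \<Rightarrow> ('o \<Rightarrow> 'o seq set set set) \<Rightarrow> bool" where
  "Q_witness Qr \<kappa> p \<rho> S \<Lambda> \<longleftrightarrow>
     \<comment> \<open>(a)\<close>
     p \<noteq> {} \<and> p \<subseteq> seqs_below \<kappa> \<and> (\<forall>\<eta>\<in>p. \<forall>\<alpha>\<le>lg \<eta>. restr \<eta> \<alpha> \<in> p) \<and>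
     \<comment> \<open>(b)\<close>
     S \<subseteq> below \<kappa> \<and> (\<forall>s\<in>S. strongly_inaccessible s) \<and> \<not> stationary \<kappa> S \<and>
     (\<forall>d<\<kappa>. strongly_inaccessible d \<longrightarrow> \<not> stationary d (S \<inter> below d)) \<and>
     \<comment> \<open>(c)\<close>
     \<rho> \<in> seqs_below \<kappa> \<and> (\<forall>\<alpha>\<le>lg \<rho>. p \<inter> seqs \<alpha> = {restr \<rho> \<alpha>}) \<and>
     snoc \<rho> False \<in> p \<and> snoc \<rho> True \<in> p \<and>
     \<comment> \<open>(d)\<close>
     (\<forall>\<eta>\<in>p. init_seg \<rho> \<eta> \<longrightarrow> snoc \<eta> False \<in> p \<and> snoc \<eta> True \<in> p) \<and>
     \<comment> \<open>(e)\<close>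
     (\<forall>\<delta><\<kappa>. \<delta> \<notin> S \<and> limit_ord \<delta> \<and> lg \<rho> < \<delta> \<longrightarrow>
        (\<forall>\<eta>\<in>seqs \<delta>. \<eta> \<in> p \<longleftrightarrow> (\<forall>\<alpha><\<delta>. restr \<eta> \<alpha> \<in> p))) \<and>
     \<comment> \<open>(f)\<close>
     (\<forall>d\<in>S. (\<forall>I\<in>\<Lambda> d. dense_open (Qr d) I) \<and> inj_into (\<Lambda> d) (below d)) \<and>
     \<comment> \<open>(g)\<close>
     (\<forall>d\<in>S. lg \<rho> < d \<longrightarrow>
        p \<inter> seqs_below d \<in> Qr d \<and>
        (\<forall>\<eta>\<in>seqs d. \<eta> \<in> p \<longleftrightarrow>
            (\<forall>\<alpha><d. restr \<eta> \<alpha> \<in> p) \<and> (\<forall>I\<in>\<Lambda> d. \<exists>q\<in>I. \<eta> \<in> lim_seqs d q)))"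

definition Q_step :: "('o::wellorder \<Rightarrow> 'o seq set set) \<Rightarrow> 'o \<Rightarrow> 'o seq set set" where
  "Q_step Qr \<kappa> = {p. \<exists>\<rho> S \<Lambda>. Q_witness Qr \<kappa> p \<rho> S \<Lambda>}"

text \<open>\<open>\<bbbQ>_\<kappa>\<close>, defined by well-founded recursion on \<open>\<kappa>\<close> (only \<open>\<bbbQ>_d\<close> for \<open>d < \<kappa>\<close> are used)\<close>
definition QQ :: "'o::wellorder \<Rightarrow> 'o seq set set" where
  "QQ = wfrec {(x, y). x < y} Q_step"

definition fulfils :: "'o::wellorder \<Rightarrow> 'o seq \<Rightarrow> 'o seq set set \<Rightarrow> bool" where
  "fulfils lam \<eta> I \<longleftrightarrow> (\<exists>q\<in>I. \<eta> \<in> lim_seqs lam q)"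

definition idQ :: "'o::wellorder \<Rightarrow> 'o seq set set" where
  "idQ lam = {A. A \<subseteq> seqs lam \<and>
     (\<exists>istar\<le>lam. \<exists>Is :: 'o \<Rightarrow> 'o seq set set.
        (\<forall>i<istar. dense_open (QQ lam) (Is i)) \<and>
        (\<forall>\<eta>\<in>A. \<exists>i<istar. \<not> fulfils lam \<eta> (Is i)))}"

definition xor_seq :: "'o seq \<Rightarrow> 'o seq \<Rightarrow> 'o seq" where
  "xor_seq \<eta> \<nu> = (\<lambda>\<beta>. case (\<eta> \<beta>, \<nu> \<beta>) of (Some a, Some b) \<Rightarrow> Some (a \<noteq> b) | _ \<Rightarrow> None)"

end

theory Submission
  imports Defs
begin

text \<open>Translation by \<open>\<eta>\<close> maps sequences of length at most \<open>\<kappa>\<close> bijectively onto themselves,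
preserving lengths, restrictions and initial segments, and it maps the two one-point extensions
of \<open>\<nu>\<close> to those of \<open>\<eta> \<oplus> \<nu>\<close>. Hence, by induction on \<open>\<kappa>\<close>, if \<open>(\<rho>, S, \<Lambda>)\<close> witnesses
\<open>p \<in> \<bbbQ>_\<kappa>\<close>, then \<open>\<eta> \<oplus> \<rho>\<close>, the same \<open>S\<close> and the translated families of dense sets witness
\<open>\<eta> \<oplus> p \<in> \<bbbQ>_\<kappa>\<close>. So translation is an involutive automorphism of \<open>\<bbbQ>_\<lambda>\<close>: it permutes the
dense open sets, and \<open>\<eta> \<oplus> \<nu>\<close> fulfils \<open>\<eta> \<oplus> \<I>\<close> iff \<open>\<nu>\<close> fulfils \<open>\<I>\<close>. Translating the
witnessing sequence of dense open sets shows that \<open>id(\<bbbQ>_\<lambda>)\<close> is closed under translation; the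
converse direction follows because translation is an involution.\<close>

lemma dom_xor_seq: "dom (xor_seq \<eta> \<nu>) = dom \<eta> \<inter> dom \<nu>"
  by (auto simp: xor_seq_def split: option.splits)

lemma xor_seq_xor_seq: "dom \<nu> \<subseteq> dom \<eta> \<Longrightarrow> xor_seq \<eta> (xor_seq \<eta> \<nu>) = \<nu>"
proof (rule ext)
  fix \<beta> assume "dom \<nu> \<subseteq> dom \<eta>"
  then show "xor_seq \<eta> (xor_seq \<eta> \<nu>) \<beta> = \<nu> \<beta>"
    by (cases "\<nu> \<beta>"; cases "\<eta> \<beta>") (auto simp: xor_seq_def)
qed

lemma lg_xor_seq: "dom \<nu> \<subseteq> dom \<eta> \<Longrightarrow> lg (xor_seq \<eta> \<nu>) = lg \<nu>"
  by (simp add: lg_def dom_xor_seq Int_absorb1)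

lemma restr_xor_seq: "restr (xor_seq \<eta> \<nu>) \<alpha> = xor_seq \<eta> (restr \<nu> \<alpha>)"
  by (rule ext) (auto simp: restr_def xor_seq_def restrict_map_def split: option.splits)

lemma dom_restr_subset: "dom (restr \<nu> \<alpha>) \<subseteq> dom \<nu>"
  by (auto simp: restr_def)

lemma seq_of_len_xor_seq_iff:
  "dom \<nu> \<subseteq> dom \<eta> \<Longrightarrow> seq_of_len \<alpha> (xor_seq \<eta> \<nu>) \<longleftrightarrow> seq_of_len \<alpha> \<nu>"
  by (simp add: seq_of_len_def dom_xor_seq Int_absorb1)

lemma xor_seq_in_seqs_iff: "dom \<nu> \<subseteq> dom \<eta> \<Longrightarrow> xor_seq \<eta> \<nu> \<in> seqs \<alpha> \<longleftrightarrow> \<nu> \<in> seqs \<alpha>"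
  by (simp add: seqs_def seq_of_len_xor_seq_iff)

lemma xor_seq_in_seqs_below_iff:
  "dom \<nu> \<subseteq> dom \<eta> \<Longrightarrow> xor_seq \<eta> \<nu> \<in> seqs_below \<kappa> \<longleftrightarrow> \<nu> \<in> seqs_below \<kappa>"
  by (simp add: seqs_below_def seq_of_len_xor_seq_iff)

lemma snoc_xor_seq:
  assumes "dom \<nu> \<subseteq> dom \<eta>" and "\<eta> (lg \<nu>) = Some a"
  shows "xor_seq \<eta> (snoc \<nu> b) = snoc (xor_seq \<eta> \<nu>) (a \<noteq> b)"
proof -
  have "lg (xor_seq \<eta> \<nu>) = lg \<nu>"
    using assms(1) by (rule lg_xor_seq)
  with assms(2) show ?thesis
    unfolding snoc_def by (intro ext) (simp add: xor_seq_def)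
qed

lemma init_seg_xor_seq_iff:
  assumes "dom \<nu> \<subseteq> dom \<eta>" and "dom \<rho> \<subseteq> dom \<eta>"
  shows "init_seg (xor_seq \<eta> \<rho>) (xor_seq \<eta> \<nu>) \<longleftrightarrow> init_seg \<rho> \<nu>"
proof -
  have "dom (restr \<nu> (lg \<rho>)) \<subseteq> dom \<eta>"
    using assms(1) dom_restr_subset by blast
  then have "xor_seq \<eta> (restr \<nu> (lg \<rho>)) = xor_seq \<eta> \<rho> \<longleftrightarrow> restr \<nu> (lg \<rho>) = \<rho>"
    using assms(2) by (metis xor_seq_xor_seq)
  then show ?thesis
    using assms by (simp add: init_seg_def lg_xor_seq restr_xor_seq)
qed

lemma below_mono: "\<alpha> \<le> \<beta> \<Longrightarrow> below \<alpha> \<subseteq> below \<beta>"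
  by (auto simp: below_def)

lemma dom_eq_below_if_in_seqs: "\<nu> \<in> seqs \<alpha> \<Longrightarrow> dom \<nu> = below \<alpha>"
  by (simp add: seqs_def seq_of_len_def)

lemma dom_subset_below_if_in_seqs_below: "\<nu> \<in> seqs_below \<kappa> \<Longrightarrow> dom \<nu> \<subseteq> below \<kappa>"
  by (auto simp: seqs_below_def seq_of_len_def below_def dest: less_trans)

lemma lg_eq_if_seq_of_len: "seq_of_len \<alpha> \<nu> \<Longrightarrow> lg \<nu> = \<alpha>"
  unfolding lg_def seq_of_len_def below_def by (rule Least_equality) auto

lemma lg_less_if_in_seqs_below: "\<nu> \<in> seqs_below \<kappa> \<Longrightarrow> lg \<nu> < \<kappa>"
  by (auto simp: seqs_below_def lg_eq_if_seq_of_len)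

lemma restr_eq_self_if_seq_of_len: "seq_of_len \<alpha> \<nu> \<Longrightarrow> restr \<nu> \<alpha> = \<nu>"
  by (rule ext) (metis domIff restr_def restrict_map_def seq_of_len_def)

lemma mem_xor_image_iff:
  assumes "\<forall>\<nu>\<in>p. dom \<nu> \<subseteq> dom \<eta>" and "dom \<mu> \<subseteq> dom \<eta>"
  shows "\<mu> \<in> xor_seq \<eta> ` p \<longleftrightarrow> xor_seq \<eta> \<mu> \<in> p"
  using assms by (metis image_eqI imageE xor_seq_xor_seq)

lemma xor_image_xor_image: "\<forall>\<nu>\<in>p. dom \<nu> \<subseteq> dom \<eta> \<Longrightarrow> xor_seq \<eta> ` xor_seq \<eta> ` p = p"
  by (simp add: image_image xor_seq_xor_seq cong: image_cong)

lemma xor_image_Int_seqs: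
  "\<forall>\<nu>\<in>p. dom \<nu> \<subseteq> dom \<eta> \<Longrightarrow> xor_seq \<eta> ` p \<inter> seqs \<alpha> = xor_seq \<eta> ` (p \<inter> seqs \<alpha>)"
  by (auto simp: xor_seq_in_seqs_iff)

lemma xor_image_Int_seqs_below:
  "\<forall>\<nu>\<in>p. dom \<nu> \<subseteq> dom \<eta> \<Longrightarrow> xor_seq \<eta> ` p \<inter> seqs_below \<kappa> = xor_seq \<eta> ` (p \<inter> seqs_below \<kappa>)"
  by (auto simp: xor_seq_in_seqs_below_iff)

lemma lim_seqs_xor_image_iff:
  assumes "\<forall>\<nu>\<in>q. dom \<nu> \<subseteq> dom \<eta>" and "\<mu> \<in> seqs \<delta>" and "below \<delta> \<subseteq> dom \<eta>"
  shows "\<mu> \<in> lim_seqs \<delta> (xor_seq \<eta> ` q) \<longleftrightarrow> xor_seq \<eta> \<mu> \<in> lim_seqs \<delta> q"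
proof -
  have \<mu>: "dom \<mu> \<subseteq> dom \<eta>"
    using assms(2,3) dom_eq_below_if_in_seqs by blast
  then have "dom (restr \<mu> \<alpha>) \<subseteq> dom \<eta>" for \<alpha>
    using dom_restr_subset by blast
  with \<mu> assms(1,2) show ?thesis
    by (simp add: lim_seqs_def seqs_def seq_of_len_xor_seq_iff mem_xor_image_iff restr_xor_seq)
qed

lemma fulfils_xor_image_iff:
  assumes "\<forall>q\<in>I. \<forall>\<nu>\<in>q. dom \<nu> \<subseteq> dom \<eta>" and "\<mu> \<in> seqs \<delta>" and "below \<delta> \<subseteq> dom \<eta>"
  shows "fulfils \<delta> \<mu> ((`) (xor_seq \<eta>) ` I) \<longleftrightarrow> fulfils \<delta> (xor_seq \<eta> \<mu>) I"
  using lim_seqs_xor_image_iff[OF _ assms(2,3)] assms(1) by (auto simp: fulfils_def)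

lemma Q_witness_cong:
  "(\<And>d. d \<in> S \<Longrightarrow> Qr d = Qr' d) \<Longrightarrow> Q_witness Qr \<kappa> p \<rho> S \<Lambda> = Q_witness Qr' \<kappa> p \<rho> S \<Lambda>"
  unfolding Q_witness_def by (simp cong: ball_cong)

lemma QQ_unfold: "QQ \<kappa> = Q_step QQ \<kappa>"
proof -
  \<comment> \<open>\<open>Q_step Qr \<kappa>\<close> only consults \<open>Qr\<close> on \<open>S \<subseteq> below \<kappa>\<close>\<close>
  have "adm_wf {(x, y). x < y} (Q_step :: ('o::wellorder \<Rightarrow> _) \<Rightarrow> _)"
  proof (unfold adm_wf_def, intro allI impI)
    fix f g :: "'o \<Rightarrow> 'o seq set set" and \<kappa>
    assume "\<forall>d. (d, \<kappa>) \<in> {(x, y). x < y} \<longrightarrow> f d = g d"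
    then have "Q_witness f \<kappa> p \<rho> S \<Lambda> = Q_witness g \<kappa> p \<rho> S \<Lambda>" for p \<rho> S \<Lambda>
    proof (cases "S \<subseteq> below \<kappa>")
      case True
      with \<open>\<forall>d. _\<close> show ?thesis
        by (intro Q_witness_cong) (auto simp: below_def)
    next
      case False
      then show ?thesis
        by (simp add: Q_witness_def)
    qed
    then show "Q_step f \<kappa> = Q_step g \<kappa>"
      by (simp add: Q_step_def)
  qed
  then have "QQ = Q_step QQ"
    unfolding QQ_def by (rule wfrec_fixpoint[OF wf])
  then show ?thesis
    by (rule fun_cong)
qed

lemma QQ_subset_seqs_below: "q \<in> QQ \<kappa> \<Longrightarrow> q \<subseteq> seqs_below \<kappa>"
  by (subst (asm) QQ_unfold) (auto simp: Q_step_def Q_witness_def)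

lemma inj_into_image: "inj_into A B \<Longrightarrow> inj_into (f ` A) B"
proof -
  assume "inj_into A B"
  then obtain g where g: "inj_on g A" "g ` A \<subseteq> B"
    by (auto simp: inj_into_def)
  have "inj_on (g \<circ> inv_into A f) (f ` A)"
    by (rule comp_inj_on) (auto intro: inj_on_inv_into inj_on_subset[OF g(1)] inv_into_into)
  moreover have "(g \<circ> inv_into A f) ` f ` A \<subseteq> B"
    using g(2) by (auto simp: inv_into_into)
  ultimately show ?thesis
    unfolding inj_into_def by blast
qed

lemma dense_open_image_involution:
  assumes closed: "\<And>p. p \<in> P \<Longrightarrow> T p \<in> P" and involutive: "\<And>p. p \<in> P \<Longrightarrow> T (T p) = p"
    and mono: "\<And>p q. q \<subseteq> p \<Longrightarrow> T q \<subseteq> T p"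
    and "dense_open P I"
  shows "dense_open P (T ` I)"
proof -
  from \<open>dense_open P I\<close> have I_sub: "I \<subseteq> P"
    and I_open: "\<And>p q. p \<in> I \<Longrightarrow> q \<in> P \<Longrightarrow> q \<subseteq> p \<Longrightarrow> q \<in> I"
    and I_dense: "\<And>p. p \<in> P \<Longrightarrow> \<exists>q\<in>I. q \<subseteq> p"
    unfolding dense_open_def by blast+
  have "q \<in> T ` I" if "p \<in> I" and q: "q \<in> P" "q \<subseteq> T p" for p q
  proof -
    have "T q \<subseteq> p"
      using mono[OF q(2)] involutive I_sub \<open>p \<in> I\<close> by auto
    then have "T q \<in> I"
      using I_open \<open>p \<in> I\<close> closed q(1) by blast
    then show ?thesis
      using involutive[OF q(1)] by (metis image_eqI)
  qed
  moreover have "\<exists>q\<in>T ` I. q \<subseteq> p" if p: "p \<in> P" for p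
  proof -
    obtain q where q: "q \<in> I" "q \<subseteq> T p"
      using I_dense closed[OF p] by blast
    then have "T q \<subseteq> p"
      using mono[OF q(2)] involutive[OF p] by simp
    with q(1) show ?thesis
      by blast
  qed
  ultimately show ?thesis
    using I_sub closed unfolding dense_open_def by blast
qed

context
  fixes Qr :: "'o::wellorder \<Rightarrow> 'o seq set set" and \<kappa> :: 'o and p :: "'o seq set"
    and \<rho> :: "'o seq" and S :: "'o set" and \<Lambda> :: "'o \<Rightarrow> 'o seq set set set"
  assumes witness: "Q_witness Qr \<kappa> p \<rho> S \<Lambda>"
begin

lemma witness_tree:
  "p \<noteq> {}" "p \<subseteq> seqs_below \<kappa>" "\<nu> \<in> p \<Longrightarrow> \<alpha> \<le> lg \<nu> \<Longrightarrow> restr \<nu> \<alpha> \<in> p"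
  using witness by (simp_all add: Q_witness_def)

lemma witness_S:
  "S \<subseteq> below \<kappa> \<and> (\<forall>s\<in>S. strongly_inaccessible s) \<and> \<not> stationary \<kappa> S \<and>
   (\<forall>d<\<kappa>. strongly_inaccessible d \<longrightarrow> \<not> stationary d (S \<inter> below d))"
  using witness by (simp add: Q_witness_def)

lemma witness_stem:
  "\<rho> \<in> seqs_below \<kappa>" "\<alpha> \<le> lg \<rho> \<Longrightarrow> p \<inter> seqs \<alpha> = {restr \<rho> \<alpha>}" "snoc \<rho> b \<in> p"
  using witness by (cases b; simp add: Q_witness_def)+

lemma witness_splitting: "\<nu> \<in> p \<Longrightarrow> init_seg \<rho> \<nu> \<Longrightarrow> snoc \<nu> b \<in> p"
  using witness by (cases b) (simp_all add: Q_witness_def)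

lemma witness_limit:
  "\<delta> < \<kappa> \<Longrightarrow> \<delta> \<notin> S \<Longrightarrow> limit_ord \<delta> \<Longrightarrow> lg \<rho> < \<delta> \<Longrightarrow> \<nu> \<in> seqs \<delta> \<Longrightarrow>
   \<nu> \<in> p \<longleftrightarrow> (\<forall>\<alpha><\<delta>. restr \<nu> \<alpha> \<in> p)"
  using witness by (simp add: Q_witness_def)

lemma witness_Lambda:
  "d \<in> S \<Longrightarrow> I \<in> \<Lambda> d \<Longrightarrow> dense_open (Qr d) I" "d \<in> S \<Longrightarrow> inj_into (\<Lambda> d) (below d)"
  using witness by (simp_all add: Q_witness_def)

lemma witness_level:
  "d \<in> S \<Longrightarrow> lg \<rho> < d \<Longrightarrow> p \<inter> seqs_below d \<in> Qr d"
  "d \<in> S \<Longrightarrow> lg \<rho> < d \<Longrightarrow> \<nu> \<in> seqs d \<Longrightarrow>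
   \<nu> \<in> p \<longleftrightarrow> (\<forall>\<alpha><d. restr \<nu> \<alpha> \<in> p) \<and> (\<forall>I\<in>\<Lambda> d. fulfils d \<nu> I)"
  using witness by (simp_all add: Q_witness_def fulfils_def)

lemma stem_in_witness: "\<rho> \<in> p"
proof -
  obtain \<alpha> where "seq_of_len \<alpha> \<rho>"
    using witness_stem(1) by (auto simp: seqs_below_def)
  then have "restr \<rho> (lg \<rho>) = \<rho>"
    by (simp add: lg_eq_if_seq_of_len restr_eq_self_if_seq_of_len)
  then show ?thesis
    using witness_stem(2)[of "lg \<rho>"] by auto
qed

context
  fixes \<eta> :: "'o seq"
  assumes below_subset_dom: "below \<kappa> \<subseteq> dom \<eta>"
begin

lemma witness_dom_subset: "\<forall>\<nu>\<in>p. dom \<nu> \<subseteq> dom \<eta>"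
  using witness_tree(2) dom_subset_below_if_in_seqs_below below_subset_dom by blast

lemma snoc_xor_seq_in_xor_image:
  assumes "\<nu> \<in> p" and "\<And>b. snoc \<nu> b \<in> p"
  shows "snoc (xor_seq \<eta> \<nu>) c \<in> xor_seq \<eta> ` p"
proof -
  have "lg \<nu> < \<kappa>"
    using assms(1) witness_tree(2) lg_less_if_in_seqs_below by blast
  then obtain a where a: "\<eta> (lg \<nu>) = Some a"
    using below_subset_dom by (auto simp: below_def)
  \<comment> \<open>translation flips the new bit \<open>a \<noteq> c\<close> back to \<open>c\<close>\<close>
  have "snoc (xor_seq \<eta> \<nu>) c = xor_seq \<eta> (snoc \<nu> (a \<noteq> c))"
    using snoc_xor_seq[of \<nu> \<eta> a "a \<noteq> c"] a assms(1) witness_dom_subset by (cases a) simp_all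
  then show ?thesis
    using assms(2) by blast
qed

lemma Q_witness_xor_tree:
  "xor_seq \<eta> ` p \<noteq> {} \<and> xor_seq \<eta> ` p \<subseteq> seqs_below \<kappa> \<and>
   (\<forall>\<nu>\<in>xor_seq \<eta> ` p. \<forall>\<alpha>\<le>lg \<nu>. restr \<nu> \<alpha> \<in> xor_seq \<eta> ` p)"
proof (intro conjI ballI allI impI)
  show "xor_seq \<eta> ` p \<noteq> {}" and "xor_seq \<eta> ` p \<subseteq> seqs_below \<kappa>"
    using witness_tree(1,2) witness_dom_subset by (auto simp: xor_seq_in_seqs_below_iff)
next
  fix \<nu> \<alpha> assume "\<nu> \<in> xor_seq \<eta> ` p" and "\<alpha> \<le> lg \<nu>"
  then obtain \<mu> where \<mu>: "\<mu> \<in> p" and \<nu>: "\<nu> = xor_seq \<eta> \<mu>"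
    by blast
  with \<open>\<alpha> \<le> lg \<nu>\<close> have "\<alpha> \<le> lg \<mu>"
    using witness_dom_subset by (simp add: lg_xor_seq)
  with \<mu> show "restr \<nu> \<alpha> \<in> xor_seq \<eta> ` p"
    using witness_tree(3) by (simp add: \<nu> restr_xor_seq)
qed

lemma Q_witness_xor_stem:
  "xor_seq \<eta> \<rho> \<in> seqs_below \<kappa> \<and>
   (\<forall>\<alpha>\<le>lg (xor_seq \<eta> \<rho>). xor_seq \<eta> ` p \<inter> seqs \<alpha> = {restr (xor_seq \<eta> \<rho>) \<alpha>}) \<and>
   snoc (xor_seq \<eta> \<rho>) False \<in> xor_seq \<eta> ` p \<and> snoc (xor_seq \<eta> \<rho>) True \<in> xor_seq \<eta> ` p"
proof -
  have \<rho>: "dom \<rho> \<subseteq> dom \<eta>"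
    using stem_in_witness witness_dom_subset by blast
  have "snoc (xor_seq \<eta> \<rho>) b \<in> xor_seq \<eta> ` p" for b
    using snoc_xor_seq_in_xor_image stem_in_witness witness_stem(3) by blast
  moreover have "xor_seq \<eta> ` p \<inter> seqs \<alpha> = {restr (xor_seq \<eta> \<rho>) \<alpha>}" if "\<alpha> \<le> lg \<rho>" for \<alpha>
    using witness_stem(2)[OF that]
    by (simp add: xor_image_Int_seqs[OF witness_dom_subset] restr_xor_seq)
  ultimately show ?thesis
    using witness_stem(1) \<rho> by (simp add: xor_seq_in_seqs_below_iff lg_xor_seq)
qed

lemma Q_witness_xor_splitting:
  "\<forall>\<nu>\<in>xor_seq \<eta> ` p. init_seg (xor_seq \<eta> \<rho>) \<nu> \<longrightarrow>
     snoc \<nu> False \<in> xor_seq \<eta> ` p \<and> snoc \<nu> True \<in> xor_seq \<eta> ` p"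
proof (intro ballI impI)
  fix \<nu> assume "\<nu> \<in> xor_seq \<eta> ` p" and "init_seg (xor_seq \<eta> \<rho>) \<nu>"
  then obtain \<mu> where \<mu>: "\<mu> \<in> p" and \<nu>: "\<nu> = xor_seq \<eta> \<mu>"
    by blast
  have "dom \<mu> \<subseteq> dom \<eta>" and "dom \<rho> \<subseteq> dom \<eta>"
    using \<mu> stem_in_witness witness_dom_subset by blast+
  with \<open>init_seg (xor_seq \<eta> \<rho>) \<nu>\<close> have "init_seg \<rho> \<mu>"
    by (simp add: \<nu> init_seg_xor_seq_iff)
  with \<mu> have "snoc \<mu> b \<in> p" for b
    by (rule witness_splitting)
  with \<mu> show "snoc \<nu> False \<in> xor_seq \<eta> ` p \<and> snoc \<nu> True \<in> xor_seq \<eta> ` p"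
    unfolding \<nu> using snoc_xor_seq_in_xor_image by blast
qed

lemma Q_witness_xor_limit:
  "\<forall>\<delta><\<kappa>. \<delta> \<notin> S \<and> limit_ord \<delta> \<and> lg (xor_seq \<eta> \<rho>) < \<delta> \<longrightarrow>
     (\<forall>\<mu>\<in>seqs \<delta>. \<mu> \<in> xor_seq \<eta> ` p \<longleftrightarrow> (\<forall>\<alpha><\<delta>. restr \<mu> \<alpha> \<in> xor_seq \<eta> ` p))"
proof (intro allI impI ballI)
  fix \<delta> \<mu> assume \<delta>: "\<delta> < \<kappa>" "\<delta> \<notin> S \<and> limit_ord \<delta> \<and> lg (xor_seq \<eta> \<rho>) < \<delta>"
    and \<mu>: "\<mu> \<in> seqs \<delta>"
  have "below \<delta> \<subseteq> dom \<eta>"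
    using below_mono[OF less_imp_le[OF \<delta>(1)]] below_subset_dom by (rule order_trans)
  then have dom_\<mu>: "dom \<mu> \<subseteq> dom \<eta>"
    unfolding dom_eq_below_if_in_seqs[OF \<mu>] .
  then have dom_restr: "dom (restr \<mu> \<alpha>) \<subseteq> dom \<eta>" for \<alpha>
    using dom_restr_subset by blast
  have "lg (xor_seq \<eta> \<rho>) = lg \<rho>"
    using stem_in_witness witness_dom_subset by (simp add: lg_xor_seq)
  moreover have "xor_seq \<eta> \<mu> \<in> seqs \<delta>"
    using \<mu> dom_\<mu> by (simp add: xor_seq_in_seqs_iff)
  ultimately have "xor_seq \<eta> \<mu> \<in> p \<longleftrightarrow> (\<forall>\<alpha><\<delta>. restr (xor_seq \<eta> \<mu>) \<alpha> \<in> p)"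
    using witness_limit[OF \<delta>(1)] \<delta>(2) by simp
  then show "\<mu> \<in> xor_seq \<eta> ` p \<longleftrightarrow> (\<forall>\<alpha><\<delta>. restr \<mu> \<alpha> \<in> xor_seq \<eta> ` p)"
    using mem_xor_image_iff[OF witness_dom_subset] dom_\<mu> dom_restr by (simp add: restr_xor_seq)
qed

context
  assumes Qr_subset: "\<And>d q. q \<in> Qr d \<Longrightarrow> q \<subseteq> seqs_below d"
    and Qr_xor_image: "\<And>d q. d < \<kappa> \<Longrightarrow> q \<in> Qr d \<Longrightarrow> xor_seq \<eta> ` q \<in> Qr d"
begin

lemma dom_subset_if_in_Qr:
  assumes "d < \<kappa>" and "q \<in> Qr d"
  shows "\<forall>\<nu>\<in>q. dom \<nu> \<subseteq> dom \<eta>"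
proof
  fix \<nu> assume "\<nu> \<in> q"
  then have "dom \<nu> \<subseteq> below d"
    using Qr_subset[OF assms(2)] dom_subset_below_if_in_seqs_below by blast
  also have "\<dots> \<subseteq> below \<kappa>"
    using assms(1) by (simp add: below_mono)
  finally show "dom \<nu> \<subseteq> dom \<eta>"
    using below_subset_dom by blast
qed

lemma Q_witness_xor_Lambda:
  "\<forall>d\<in>S. (\<forall>I\<in>(\<lambda>I. (`) (xor_seq \<eta>) ` I) ` \<Lambda> d. dense_open (Qr d) I) \<and>
     inj_into ((\<lambda>I. (`) (xor_seq \<eta>) ` I) ` \<Lambda> d) (below d)"
proof (intro ballI conjI)
  fix d assume d: "d \<in> S"
  then have "d < \<kappa>"
    using witness_S by (auto simp: below_def)
  show "inj_into ((\<lambda>I. (`) (xor_seq \<eta>) ` I) ` \<Lambda> d) (below d)"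
    using witness_Lambda(2)[OF d] by (rule inj_into_image)
  fix I' assume "I' \<in> (\<lambda>I. (`) (xor_seq \<eta>) ` I) ` \<Lambda> d"
  then obtain I where "I \<in> \<Lambda> d" and I': "I' = (`) (xor_seq \<eta>) ` I"
    by blast
  then have "dense_open (Qr d) I"
    using witness_Lambda(1)[OF d] by blast
  then show "dense_open (Qr d) I'"
    unfolding I' using Qr_xor_image[OF \<open>d < \<kappa>\<close>]
      xor_image_xor_image[OF dom_subset_if_in_Qr[OF \<open>d < \<kappa>\<close>]]
    by (intro dense_open_image_involution) (auto intro: image_mono)
qed

lemma Q_witness_xor_level:
  "\<forall>d\<in>S. lg (xor_seq \<eta> \<rho>) < d \<longrightarrow>
     xor_seq \<eta> ` p \<inter> seqs_below d \<in> Qr d \<and>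
     (\<forall>\<mu>\<in>seqs d. \<mu> \<in> xor_seq \<eta> ` p \<longleftrightarrow>
        (\<forall>\<alpha><d. restr \<mu> \<alpha> \<in> xor_seq \<eta> ` p) \<and>
        (\<forall>I\<in>(\<lambda>I. (`) (xor_seq \<eta>) ` I) ` \<Lambda> d. \<exists>q\<in>I. \<mu> \<in> lim_seqs d q))"
proof (intro ballI impI conjI)
  fix d assume d: "d \<in> S" and "lg (xor_seq \<eta> \<rho>) < d"
  then have "d < \<kappa>"
    using witness_S by (auto simp: below_def)
  have lg: "lg \<rho> < d"
    using \<open>lg (xor_seq \<eta> \<rho>) < d\<close> stem_in_witness witness_dom_subset by (simp add: lg_xor_seq)
  show "xor_seq \<eta> ` p \<inter> seqs_below d \<in> Qr d"
    unfolding xor_image_Int_seqs_below[OF witness_dom_subset]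
    by (rule Qr_xor_image[OF \<open>d < \<kappa>\<close> witness_level(1)[OF d lg]])
  fix \<mu> assume \<mu>: "\<mu> \<in> seqs d"
  have below_d: "below d \<subseteq> dom \<eta>"
    using below_mono[OF less_imp_le[OF \<open>d < \<kappa>\<close>]] below_subset_dom by (rule order_trans)
  then have dom_\<mu>: "dom \<mu> \<subseteq> dom \<eta>"
    unfolding dom_eq_below_if_in_seqs[OF \<mu>] .
  then have "xor_seq \<eta> \<mu> \<in> seqs d"
    using \<mu> by (simp add: xor_seq_in_seqs_iff)
  then have level: "xor_seq \<eta> \<mu> \<in> p \<longleftrightarrow>
      (\<forall>\<alpha><d. restr (xor_seq \<eta> \<mu>) \<alpha> \<in> p) \<and> (\<forall>I\<in>\<Lambda> d. fulfils d (xor_seq \<eta> \<mu>) I)"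
    by (rule witness_level(2)[OF d lg])
  have "dom (restr \<mu> \<alpha>) \<subseteq> dom \<eta>" for \<alpha>
    using dom_\<mu> dom_restr_subset by blast
  then have restrs: "(\<forall>\<alpha><d. restr \<mu> \<alpha> \<in> xor_seq \<eta> ` p) \<longleftrightarrow>
      (\<forall>\<alpha><d. restr (xor_seq \<eta> \<mu>) \<alpha> \<in> p)"
    by (simp add: mem_xor_image_iff[OF witness_dom_subset] restr_xor_seq)
  have "fulfils d \<mu> ((`) (xor_seq \<eta>) ` I) \<longleftrightarrow> fulfils d (xor_seq \<eta> \<mu>) I" if "I \<in> \<Lambda> d" for I
  proof (rule fulfils_xor_image_iff[OF _ \<mu> below_d])
    have "I \<subseteq> Qr d"
      using witness_Lambda(1)[OF d that] by (simp add: dense_open_def)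
    then show "\<forall>q\<in>I. \<forall>\<nu>\<in>q. dom \<nu> \<subseteq> dom \<eta>"
      using dom_subset_if_in_Qr[OF \<open>d < \<kappa>\<close>] by blast
  qed
  then have fulfilments: "(\<forall>I\<in>(\<lambda>I. (`) (xor_seq \<eta>) ` I) ` \<Lambda> d. fulfils d \<mu> I) \<longleftrightarrow>
      (\<forall>I\<in>\<Lambda> d. fulfils d (xor_seq \<eta> \<mu>) I)"
    by simp
  show "\<mu> \<in> xor_seq \<eta> ` p \<longleftrightarrow>
      (\<forall>\<alpha><d. restr \<mu> \<alpha> \<in> xor_seq \<eta> ` p) \<and>
      (\<forall>I\<in>(\<lambda>I. (`) (xor_seq \<eta>) ` I) ` \<Lambda> d. \<exists>q\<in>I. \<mu> \<in> lim_seqs d q)"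
    unfolding fulfils_def[symmetric]
    by (simp only: mem_xor_image_iff[OF witness_dom_subset dom_\<mu>] level restrs fulfilments)
qed

lemma Q_witness_xor_image:
  "Q_witness Qr \<kappa> (xor_seq \<eta> ` p) (xor_seq \<eta> \<rho>) S (\<lambda>d. (\<lambda>I. (`) (xor_seq \<eta>) ` I) ` \<Lambda> d)"
  using Q_witness_xor_tree witness_S Q_witness_xor_stem Q_witness_xor_splitting
    Q_witness_xor_limit Q_witness_xor_Lambda Q_witness_xor_level
  unfolding Q_witness_def by (elim conjE) (intro conjI; assumption)

end

end

end

lemma QQ_xor_image:
  assumes "p \<in> QQ \<kappa>" and "below \<kappa> \<subseteq> dom \<eta>"
  shows "xor_seq \<eta> ` p \<in> QQ \<kappa>"
  using assms
proof (induction \<kappa> arbitrary: p rule: less_induct)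
  case (less \<kappa>)
  obtain \<rho> S \<Lambda> where witness: "Q_witness QQ \<kappa> p \<rho> S \<Lambda>"
    using less.prems(1) by (subst (asm) QQ_unfold) (auto simp: Q_step_def)
  have xor_closed: "xor_seq \<eta> ` q \<in> QQ d" if "d < \<kappa>" and "q \<in> QQ d" for d q
    using less.IH[OF that] below_mono[OF less_imp_le[OF \<open>d < \<kappa>\<close>]] less.prems(2) by blast
  have "Q_witness QQ \<kappa> (xor_seq \<eta> ` p) (xor_seq \<eta> \<rho>) S (\<lambda>d. (\<lambda>I. (`) (xor_seq \<eta>) ` I) ` \<Lambda> d)"
    using witness less.prems(2) QQ_subset_seqs_below xor_closed by (rule Q_witness_xor_image)
  then show ?case
    by (subst QQ_unfold) (auto simp: Q_step_def)
qed

lemma dom_subset_if_in_QQ: "q \<in> QQ \<kappa> \<Longrightarrow> \<eta> \<in> seqs \<kappa> \<Longrightarrow> \<forall>\<nu>\<in>q. dom \<nu> \<subseteq> dom \<eta>"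
  using QQ_subset_seqs_below dom_subset_below_if_in_seqs_below dom_eq_below_if_in_seqs by blast

lemma dense_open_QQ_xor_image:
  assumes "dense_open (QQ \<kappa>) I" and "\<eta> \<in> seqs \<kappa>"
  shows "dense_open (QQ \<kappa>) ((`) (xor_seq \<eta>) ` I)"
  using assms(1)
proof (rule dense_open_image_involution[rotated 3])
  fix q assume "q \<in> QQ \<kappa>"
  show "xor_seq \<eta> ` q \<in> QQ \<kappa>"
    using QQ_xor_image[OF \<open>q \<in> QQ \<kappa>\<close>] dom_eq_below_if_in_seqs[OF assms(2)] by simp
  show "xor_seq \<eta> ` xor_seq \<eta> ` q = q"
    using xor_image_xor_image dom_subset_if_in_QQ[OF \<open>q \<in> QQ \<kappa>\<close> assms(2)] .
qed blast

lemma xor_image_in_idQ: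
  assumes "B \<in> idQ \<kappa>" and "\<eta> \<in> seqs \<kappa>"
  shows "xor_seq \<eta> ` B \<in> idQ \<kappa>"
proof -
  have dom_\<eta>: "dom \<eta> = below \<kappa>"
    using assms(2) by (rule dom_eq_below_if_in_seqs)
  obtain istar Is where "istar \<le> \<kappa>" and dense: "\<forall>i<istar. dense_open (QQ \<kappa>) (Is i)"
    and avoid: "\<forall>\<nu>\<in>B. \<exists>i<istar. \<not> fulfils \<kappa> \<nu> (Is i)" and "B \<subseteq> seqs \<kappa>"
    using assms(1) unfolding idQ_def mem_Collect_eq by blast
  have dom_B: "\<forall>\<nu>\<in>B. dom \<nu> \<subseteq> dom \<eta>"
    using \<open>B \<subseteq> seqs \<kappa>\<close> dom_\<eta> dom_eq_below_if_in_seqs by blast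
  have "xor_seq \<eta> ` B \<subseteq> seqs \<kappa>"
    using \<open>B \<subseteq> seqs \<kappa>\<close> dom_B by (auto simp: xor_seq_in_seqs_iff)
  moreover have "\<forall>i<istar. dense_open (QQ \<kappa>) ((`) (xor_seq \<eta>) ` Is i)"
    using dense dense_open_QQ_xor_image[OF _ assms(2)] by blast
  moreover have "\<forall>\<mu>\<in>xor_seq \<eta> ` B. \<exists>i<istar. \<not> fulfils \<kappa> \<mu> ((`) (xor_seq \<eta>) ` Is i)"
  proof
    fix \<mu> assume "\<mu> \<in> xor_seq \<eta> ` B"
    then obtain \<nu> where \<nu>: "\<nu> \<in> B" and \<mu>: "\<mu> = xor_seq \<eta> \<nu>"
      by blast
    obtain i where "i < istar" and "\<not> fulfils \<kappa> \<nu> (Is i)"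
      using avoid \<nu> by blast
    have "Is i \<subseteq> QQ \<kappa>"
      using dense \<open>i < istar\<close> by (simp add: dense_open_def)
    then have "\<forall>q\<in>Is i. \<forall>\<nu>\<in>q. dom \<nu> \<subseteq> dom \<eta>"
      using dom_subset_if_in_QQ[OF _ assms(2)] by blast
    moreover have "\<mu> \<in> seqs \<kappa>"
      using \<nu> \<open>B \<subseteq> seqs \<kappa>\<close> dom_B by (auto simp: \<mu> xor_seq_in_seqs_iff)
    ultimately have "fulfils \<kappa> \<mu> ((`) (xor_seq \<eta>) ` Is i) \<longleftrightarrow> fulfils \<kappa> \<nu> (Is i)"
      using fulfils_xor_image_iff[of "Is i" \<eta> \<mu> \<kappa>] dom_\<eta> \<nu> dom_B by (simp add: \<mu> xor_seq_xor_seq)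
    with \<open>i < istar\<close> \<open>\<not> fulfils \<kappa> \<nu> (Is i)\<close>
    show "\<exists>i<istar. \<not> fulfils \<kappa> \<mu> ((`) (xor_seq \<eta>) ` Is i)"
      by blast
  qed
  ultimately show ?thesis
    unfolding idQ_def mem_Collect_eq using \<open>istar \<le> \<kappa>\<close>
    by (intro conjI exI[of _ istar] exI[of _ "\<lambda>i. (`) (xor_seq \<eta>) ` Is i"]) simp_all
qed

theorem claim3p24:
  fixes lam :: "'o::wellorder" and B :: "'o seq set" and \<eta> :: "'o seq"
  assumes "strongly_inaccessible lam"
    and "B \<subseteq> seqs lam"
    and "\<eta> \<in> seqs lam"
  shows "B \<in> idQ lam \<longleftrightarrow> (xor_seq \<eta>) ` B \<in> idQ lam"
proof
  show "xor_seq \<eta> ` B \<in> idQ lam" if "B \<in> idQ lam"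
    using that assms(3) by (rule xor_image_in_idQ)
next
  assume "xor_seq \<eta> ` B \<in> idQ lam"
  then have "xor_seq \<eta> ` xor_seq \<eta> ` B \<in> idQ lam"
    using assms(3) by (rule xor_image_in_idQ)
  moreover have "\<forall>\<nu>\<in>B. dom \<nu> \<subseteq> dom \<eta>"
    using assms(2,3) dom_eq_below_if_in_seqs by blast
  ultimately show "B \<in> idQ lam"
    by (simp add: xor_image_xor_image)
qed

end
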